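(* Let $\mathbb{S}$ be a metric space with its Borel $\sigma$-field, let $\{\mu_n\}_{n=1,2,\ldots}$ be a sequence of measures on $\mathbb{S}$ converging weakly to a finite measure $\mu$ on $\mathbb{S}$, and let $\{f_n,g_n\}_{n=1,2,\ldots}$ be measurable $[-\infty,+\infty]$-valued functions on $\mathbb{S}$ such that $f_n(s)\ge g_n(s)$ for all $n$ and $s\in\mathbb{S}$, and $$-\infty<\int_{\mathbb{S}}\limsup_{n\to\infty,\,s'\to s} g_n(s')\,\mu(ds)\le\liminf_{n\to\infty}\int_{\mathbb{S}} g_n(s)\,\mu_n(ds).$$ If the functions $\{g_n\}_{n=1,2,\ldots}$ are uniformly bounded from above (by one constant), then there exists $N\in\{0,1,2,\ldots\}$ such that $\{f_{n+N}^-\}_{n=1,2,\ldots}$ is uniformly integrable with respect to $\{\mu_{n+N}\}_{n=1,2,\ldots}$.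
   Context: Weak convergence: $\int f\,d\mu_n\to\int f\,d\mu$ for all bounded continuous $f$. $f^-=-\min\{f,0\}$. Integrals of extended-real functions are $\int f^+-\int f^-$, defined when one of these is finite; all integrals in the hypotheses are assumed defined. $\limsup_{n\to\infty,s'\to s}g_n(s'):=\inf_{n\ge1,\delta>0}\sup_{m\ge n,\,s'\in B_\delta(s)}g_m(s')$, with $B_\delta(s)$ the ball of radius $\delta$ around $s$. A sequence $\{h_n\}$ is uniformly integrable with respect to $\{\nu_n\}$ if $\lim_{K\to+\infty}\sup_{n}\int|h_n|\,\mathbf{1}\{|h_n|\ge K\}\,d\nu_n=0$. *)

theory Defs
  imports "HOL-Analysis.Analysis"
begin


definition integral_defined :: "'a measure \<Rightarrow> ('a \<Rightarrow> ereal) \<Rightarrow> bool" where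
  "integral_defined M f \<longleftrightarrow>
     (\<integral>\<^sup>+ x. e2ennreal (f x) \<partial>M) < \<infinity> \<or> (\<integral>\<^sup>+ x. e2ennreal (- f x) \<partial>M) < \<infinity>"

definition ext_integral :: "'a measure \<Rightarrow> ('a \<Rightarrow> ereal) \<Rightarrow> ereal" where
  "ext_integral M f =
     enn2ereal (\<integral>\<^sup>+ x. e2ennreal (f x) \<partial>M) - enn2ereal (\<integral>\<^sup>+ x. e2ennreal (- f x) \<partial>M)"

definition weak_conv :: "(nat \<Rightarrow> 'a::metric_space measure) \<Rightarrow> 'a measure \<Rightarrow> bool" where
  "weak_conv M \<mu> \<longleftrightarrow>
     (\<forall>f :: 'a \<Rightarrow> real. continuous_on UNIV f \<and> bounded (range f) \<longrightarrow>
        (\<forall>n. integral_defined (M n) (\<lambda>x. ereal (f x))) \<and>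
        (\<lambda>n. ext_integral (M n) (\<lambda>x. ereal (f x))) \<longlonglongrightarrow> ext_integral \<mu> (\<lambda>x. ereal (f x)))"

text \<open>limsup_{n\<rightarrow>\<infinity>, s'\<rightarrow>s} g_n(s') = inf_{n, \<delta>>0} sup_{m\<ge>n, s' \<in> ball s \<delta>} g_m(s')\<close>
definition joint_limsup :: "(nat \<Rightarrow> 'a::metric_space \<Rightarrow> ereal) \<Rightarrow> 'a \<Rightarrow> ereal" where
  "joint_limsup g s =
     (INF p \<in> {(n, \<delta>::real). \<delta> > 0}. SUP q \<in> {(m, s'). m \<ge> fst p \<and> s' \<in> ball s (snd p)}. g (fst q) (snd q))"

definition neg_part :: "('a \<Rightarrow> ereal) \<Rightarrow> 'a \<Rightarrow> ereal" where
  "neg_part f x = - min (f x) 0"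

definition unif_integrable :: "(nat \<Rightarrow> 'a \<Rightarrow> ereal) \<Rightarrow> (nat \<Rightarrow> 'a measure) \<Rightarrow> bool" where
  "unif_integrable h \<nu> \<longleftrightarrow>
     ((\<lambda>K::real. SUP n. \<integral>\<^sup>+ x. e2ennreal \<bar>h n x\<bar> * indicator {x. ereal K \<le> \<bar>h n x\<bar>} x \<partial>(\<nu> n))
        \<longlongrightarrow> 0) at_top"

end

theory Submission
  imports Defs
begin

(* Fix K >= 0 and truncate g_n from below at -K. For uniformly bounded functions phi_n, weak
   convergence yields the Fatou-type bound
     limsup_n int phi_n d mu_n <= int (limsup_{n -> oo, s' -> s} phi_n(s')) mu(ds):
   the function sup_{k >= m} phi_k is dominated by its Lipschitz envelope, a continuous function
   that stays below the supremum of phi_k over k >= m and the ball of radius 1/(m+1), and letting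
   m -> oo is dominated convergence. Writing int g_n = int max(g_n, -K) - int (g_n + K)^-, the
   hypothesis liminf_n int g_n d mu_n >= int g* d mu therefore bounds the tails
   int (g_n + K)^- d mu_n eventually by int (g* + K)^- d mu plus any margin, and the latter is
   small for K large. The shift N makes mu_n finite and int g_n^- d mu_n finite, so each of the
   finitely many remaining tails also vanishes as K -> oo. Finally f_n >= g_n gives
   f_n^- 1{f_n^- >= 2K} <= 2 (g_n + K)^-. *)

lemma real_of_ereal_bounded:
  assumes "ereal a \<le> x \<and> x \<le> ereal b"
  shows "ereal (real_of_ereal x) = x" and "a \<le> real_of_ereal x \<and> real_of_ereal x \<le> b"
  using assms by (cases x; simp)+

lemma integrable_bounded_finite_measure:
  assumes "finite_measure M" "f \<in> borel_measurable M" "\<And>x. a \<le> f x \<and> f x \<le> (b::real)"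
  shows "integrable M f"
proof (rule finite_measure.integrable_const_bound[OF assms(1) _ assms(2)])
  show "AE x in M. norm (f x) \<le> \<bar>a\<bar> + \<bar>b\<bar>"
    using assms(3) by (intro AE_I2) (simp add: abs_le_iff; smt (verit))
qed

lemma borel_measurable_sets_eq_borel:
  "sets M = sets borel \<Longrightarrow> h \<in> borel_measurable borel \<Longrightarrow> h \<in> borel_measurable M"
  using measurable_cong_sets[of M borel] by blast

lemma eventually_all_if_antimono:
  fixes D :: "nat \<Rightarrow> 'b::linorder \<Rightarrow> 'c::preorder"
  assumes antimono: "\<And>n K K'. K \<le> K' \<Longrightarrow> D n K' \<le> D n K"
    and each: "\<And>n. eventually (\<lambda>K. D n K \<le> e) at_top"
    and tail: "eventually (\<lambda>n. D n K0 \<le> e) sequentially"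
  shows "eventually (\<lambda>K. \<forall>n. D n K \<le> e) at_top"
proof -
  obtain n0 where n0: "\<And>n. n0 \<le> n \<Longrightarrow> D n K0 \<le> e"
    using tail by (auto simp: eventually_sequentially)
  have "eventually (\<lambda>K. \<forall>n\<in>{..<n0}. D n K \<le> e) at_top"
    by (intro eventually_ball_finite) (auto intro: each)
  then show ?thesis
    using eventually_ge_at_top[of K0]
  proof eventually_elim
    case (elim K)
    show "\<forall>n. D n K \<le> e"
    proof
      fix n
      show "D n K \<le> e"
      proof (cases "n < n0")
        case False
        then show ?thesis using n0[of n] antimono[OF elim(2), of n] by (auto intro: order_trans)
      qed (use elim(1) in auto)
    qed
  qed
qed

section \<open>Extended integrals and lower tails\<close>

lemma ext_integral_ereal:
  assumes "integrable M f"
  shows "ext_integral M (\<lambda>x. ereal (f x)) = ereal (\<integral>x. f x \<partial>M)"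
proof -
  obtain r q where "0 \<le> r" "0 \<le> q"
    "(\<integral>\<^sup>+x. ennreal (f x) \<partial>M) = ennreal r" "(\<integral>\<^sup>+x. ennreal (- f x) \<partial>M) = ennreal q"
    "(\<integral>x. f x \<partial>M) = r - q"
    using integrableE[OF assms] by metis
  then show ?thesis unfolding ext_integral_def by simp
qed

lemma ext_integral_const_1: "ext_integral M (\<lambda>x. ereal 1) = enn2ereal (emeasure M (space M))"
  unfolding ext_integral_def by (simp add: nn_integral_const ennreal_neg zero_ennreal.rep_eq)

lemma weak_conv_eventually_finite_measure:
  assumes weak: "weak_conv M \<mu>" and fin: "finite_measure \<mu>"
  shows "eventually (\<lambda>n. finite_measure (M n)) sequentially"
proof -
  have "(\<lambda>n. ext_integral (M n) (\<lambda>x. ereal 1)) \<longlonglongrightarrow> ext_integral \<mu> (\<lambda>x. ereal 1)"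
    using weak unfolding weak_conv_def by (auto intro: boundedI[where B=1])
  moreover have "ext_integral \<mu> (\<lambda>x. ereal 1) < \<infinity>"
    using finite_measure.emeasure_finite[OF fin] by (simp add: ext_integral_const_1 less_top)
  ultimately have "eventually (\<lambda>n. ext_integral (M n) (\<lambda>x. ereal 1) < \<infinity>) sequentially"
    by (rule order_tendstoD(2))
  then show ?thesis
    by eventually_elim (auto simp: ext_integral_const_1 intro!: finite_measureI)
qed

lemma nn_integral_negative_part_finite:
  assumes fin: "finite_measure M" and le_C: "\<And>x. h x \<le> ereal C" and lower: "- \<infinity> < ext_integral M h"
  shows "(\<integral>\<^sup>+ x. e2ennreal (- h x) \<partial>M) < \<infinity>"
proof (rule ccontr)
  assume "\<not> ?thesis"
  then have neg_inf: "(\<integral>\<^sup>+ x. e2ennreal (- h x) \<partial>M) = \<infinity>" by (simp add: less_top[symmetric])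
  have "(\<integral>\<^sup>+ x. e2ennreal (h x) \<partial>M) \<le> (\<integral>\<^sup>+ x. ennreal C \<partial>M)"
    by (intro nn_integral_mono) (metis e2ennreal_ereal e2ennreal_mono le_C)
  also have "\<dots> < \<infinity>"
    using finite_measure.emeasure_finite[OF fin]
    by (simp add: ennreal_mult_less_top less_top)
  finally have "ext_integral M h = - \<infinity>"
    unfolding ext_integral_def neg_inf by (cases "\<integral>\<^sup>+ x. e2ennreal (h x) \<partial>M") auto
  then show False using lower by simp
qed

definition lower_tail :: "'a measure \<Rightarrow> ('a \<Rightarrow> ereal) \<Rightarrow> real \<Rightarrow> ennreal" where
  "lower_tail M h K = (\<integral>\<^sup>+ x. e2ennreal (- h x - ereal K) \<partial>M)"

lemma e2ennreal_diff_antimono: "K \<le> K' \<Longrightarrow> e2ennreal (a - ereal K') \<le> e2ennreal (a - ereal K)"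
  by (rule e2ennreal_mono) (cases a, auto)

lemma lower_tail_antimono: "K \<le> K' \<Longrightarrow> lower_tail M h K' \<le> lower_tail M h K"
  unfolding lower_tail_def by (intro nn_integral_mono e2ennreal_diff_antimono)

lemma lower_tail_tendsto_0:
  assumes [measurable]: "h \<in> borel_measurable M"
    and fin: "(\<integral>\<^sup>+ x. e2ennreal (- h x) \<partial>M) < \<infinity>"
  shows "(lower_tail M h \<longlongrightarrow> 0) at_top"
proof -
  define F where "F = (\<lambda>K::nat. \<lambda>x. e2ennreal (- h x - ereal (real K)))"
  have dec: "decseq F"
    unfolding F_def by (intro decseq_SucI le_funI e2ennreal_diff_antimono) simp
  have fin0: "integral\<^sup>N M (F 0) < \<infinity>"
    using fin by (simp add: F_def)
  have "(\<integral>\<^sup>+ x. (INF K. F K x) \<partial>M) = (INF K. integral\<^sup>N M (F K))"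
    by (rule nn_integral_monotone_convergence_INF_decseq[OF dec _ fin0]) (simp add: F_def)
  moreover have "AE x in M. e2ennreal (- h x) \<noteq> \<infinity>"
    using fin by (intro nn_integral_PInf_AE) auto
  then have "AE x in M. (INF K. F K x) = 0"
  proof eventually_elim
    case (elim x)
    then obtain K :: nat where "- h x \<le> ereal (real K)"
      using real_arch_simple[of "real_of_ereal (- h x)"] by (cases "h x") auto
    then have "F K x = 0" unfolding F_def by (cases "h x") (auto simp: ennreal_neg e2ennreal_neg)
    then show ?case by (metis INF_lower UNIV_I le_zero_eq)
  qed
  ultimately have INF_0: "(INF K. lower_tail M h (real K)) = 0"
    by (simp add: nn_integral_cong_AE F_def lower_tail_def)
  show ?thesis
  proof (rule order_tendstoI)
    fix a :: ennreal assume "0 < a"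
    then obtain K :: nat where "lower_tail M h (real K) < a"
      using INF_0 by (metis INF_less_iff)
    then show "eventually (\<lambda>K'. lower_tail M h K' < a) at_top"
      unfolding eventually_at_top_linorder by (meson lower_tail_antimono order.strict_trans1)
  qed simp
qed

(* Only meaningful for x < \<infinity>: real_of_ereal sends \<infinity> to 0. *)
definition truncate_below :: "real \<Rightarrow> ereal \<Rightarrow> real" where
  "truncate_below K x = real_of_ereal (max x (ereal (- K)))"

lemma ereal_truncate_below: "x \<noteq> \<infinity> \<Longrightarrow> ereal (truncate_below K x) = max x (ereal (- K))"
  unfolding truncate_below_def by (cases x) (auto simp: max_def)

lemma truncate_below_bounds:
  assumes "x \<le> ereal C" "0 \<le> C" "0 \<le> K"
  shows "- K \<le> truncate_below K x \<and> truncate_below K x \<le> C"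
  using assms unfolding truncate_below_def by (cases x) (auto simp: max_def)

lemma e2ennreal_eq_truncate_below:
  assumes "x \<noteq> \<infinity>" "0 \<le> K"
  shows "e2ennreal x = ennreal (truncate_below K x)"
  using assms unfolding truncate_below_def
  by (cases x) (auto simp: ennreal_neg e2ennreal_neg max_def)

lemma e2ennreal_uminus_eq_truncate_below:
  assumes "x \<noteq> \<infinity>" "0 \<le> K"
  shows "e2ennreal (- x) = ennreal (- truncate_below K x) + e2ennreal (- x - ereal K)"
proof (cases x)
  case (real r)
  show ?thesis
  proof (cases "- K \<le> r")
    case False
    then have "ennreal (- r) = ennreal K + ennreal (- r - K)"
      using assms by (subst ennreal_plus[symmetric]) auto
    then show ?thesis using real False by (auto simp: truncate_below_def ennreal_neg)
  qed (use real assms in \<open>auto simp: truncate_below_def ennreal_neg\<close>)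
qed (use assms in \<open>auto simp: truncate_below_def ennreal_neg\<close>)

lemma ext_integral_truncate_below:
  assumes fin: "finite_measure M" and [measurable]: "h \<in> borel_measurable M"
    and le_C: "\<And>x. h x \<le> ereal C" and "0 \<le> C" "0 \<le> K"
    and neg_fin: "(\<integral>\<^sup>+ x. e2ennreal (- h x) \<partial>M) < \<infinity>"
  shows "integrable M (\<lambda>x. truncate_below K (h x))" and "lower_tail M h K < \<infinity>"
    and "ext_integral M h = ereal ((\<integral>x. truncate_below K (h x) \<partial>M) - enn2real (lower_tail M h K))"
proof -
  have h_fin: "h x \<noteq> \<infinity>" for x using le_C[of x] by auto
  show int: "integrable M (\<lambda>x. truncate_below K (h x))"
    by (rule integrable_bounded_finite_measure[OF fin _ truncate_below_bounds[OF le_C \<open>0 \<le> C\<close> \<open>0 \<le> K\<close>]])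
       (simp add: truncate_below_def)
  have pos: "(\<integral>\<^sup>+ x. e2ennreal (h x) \<partial>M) = (\<integral>\<^sup>+ x. ennreal (truncate_below K (h x)) \<partial>M)"
    using h_fin \<open>0 \<le> K\<close> by (intro nn_integral_cong) (simp add: e2ennreal_eq_truncate_below)
  have neg: "(\<integral>\<^sup>+ x. e2ennreal (- h x) \<partial>M)
      = (\<integral>\<^sup>+ x. ennreal (- truncate_below K (h x)) \<partial>M) + lower_tail M h K"
    unfolding lower_tail_def using h_fin \<open>0 \<le> K\<close>
    by (subst nn_integral_add[symmetric])
       (auto simp: e2ennreal_uminus_eq_truncate_below truncate_below_def intro!: nn_integral_cong)
  then show tail_fin: "lower_tail M h K < \<infinity>"
    using neg_fin by (auto simp: top_unique)
  obtain r q where rq: "0 \<le> r" "0 \<le> q"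
    "(\<integral>\<^sup>+x. ennreal (truncate_below K (h x)) \<partial>M) = ennreal r"
    "(\<integral>\<^sup>+x. ennreal (- truncate_below K (h x)) \<partial>M) = ennreal q"
    "(\<integral>x. truncate_below K (h x) \<partial>M) = r - q"
    using integrableE[OF int] by metis
  obtain d where d: "0 \<le> d" "lower_tail M h K = ennreal d"
    using tail_fin by (cases "lower_tail M h K") auto
  show "ext_integral M h = ereal ((\<integral>x. truncate_below K (h x) \<partial>M) - enn2real (lower_tail M h K))"
    unfolding ext_integral_def pos neg rq d using rq d by (simp flip: ennreal_plus)
qed

section \<open>The joint limit superior\<close>

definition ball_sup :: "(nat \<Rightarrow> 'a::metric_space \<Rightarrow> ereal) \<Rightarrow> nat \<Rightarrow> 'a \<Rightarrow> ereal" where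
  "ball_sup g m s = (SUP q \<in> {(k, t). m \<le> k \<and> t \<in> ball s (1 / real (Suc m))}. g (fst q) (snd q))"

lemma ball_sup_upper: "m \<le> k \<Longrightarrow> dist s t < 1 / real (Suc m) \<Longrightarrow> g k t \<le> ball_sup g m s"
  unfolding ball_sup_def by (rule SUP_upper2[of "(k, t)"]) auto

lemma ball_sup_least: "(\<And>k t. m \<le> k \<Longrightarrow> g k t \<le> c) \<Longrightarrow> ball_sup g m s \<le> c"
  unfolding ball_sup_def by (rule SUP_least) auto

lemma ball_sup_antimono: "m \<le> m' \<Longrightarrow> ball_sup g m' s \<le> ball_sup g m s"
  unfolding ball_sup_def by (intro SUP_subset_mono) (auto simp: frac_le order.strict_trans2)

lemma ball_sup_bounds:
  assumes "\<And>n s. a \<le> g n s \<and> g n s \<le> b"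
  shows "a \<le> ball_sup g m s \<and> ball_sup g m s \<le> b"
proof
  show "a \<le> ball_sup g m s" using assms[of m s] ball_sup_upper[of m m s s g] by auto
  show "ball_sup g m s \<le> b" using assms by (intro ball_sup_least) auto
qed

lemma joint_limsup_eq_INF_ball_sup: "joint_limsup g s = (INF m. ball_sup g m s)"
proof (rule antisym)
  show "joint_limsup g s \<le> (INF m. ball_sup g m s)"
    unfolding joint_limsup_def ball_sup_def
    by (intro INF_greatest INF_lower2[of "(m, 1 / real (Suc m))" for m]) auto
next
  show "(INF m. ball_sup g m s) \<le> joint_limsup g s"
    unfolding joint_limsup_def
  proof (rule INF_greatest)
    fix p :: "nat \<times> real" assume "p \<in> {(n, \<delta>). \<delta> > 0}"
    then obtain n \<delta> where p: "p = (n, \<delta>)" "0 < \<delta>" by auto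
    obtain m0 :: nat where "inverse (real (Suc m0)) < \<delta>"
      using reals_Archimedean[OF \<open>0 < \<delta>\<close>] by auto
    then have "1 / real (Suc (max n m0)) < \<delta>"
      by (smt (verit) frac_le inverse_eq_divide max.cobounded2 of_nat_0_less_iff of_nat_mono
          zero_less_Suc Suc_le_mono)
    then have "ball_sup g (max n m0) s \<le> (SUP q \<in> {(m, t). fst p \<le> m \<and> t \<in> ball s (snd p)}. g (fst q) (snd q))"
      unfolding ball_sup_def p by (intro SUP_subset_mono) auto
    then show "(INF m. ball_sup g m s) \<le> (SUP q \<in> {(m, t). fst p \<le> m \<and> t \<in> ball s (snd p)}. g (fst q) (snd q))"
      by (rule INF_lower2[rotated]) simp
  qed
qed

lemma joint_limsup_le: "(\<And>n s. g n s \<le> c) \<Longrightarrow> joint_limsup g s \<le> c"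
  unfolding joint_limsup_eq_INF_ball_sup by (rule INF_lower2[of 0]) (auto intro: ball_sup_least)

lemma joint_limsup_ge: "(\<And>n s. c \<le> g n s) \<Longrightarrow> c \<le> joint_limsup g s"
  unfolding joint_limsup_eq_INF_ball_sup
  by (intro INF_greatest order.trans[OF _ ball_sup_upper[of m m s s g for m]]) auto

lemma open_ball_sup_superlevel: "open {s. a < ball_sup g m s}"
proof -
  have "{s. a < ball_sup g m s} = (\<Union>q\<in>{(k, t). m \<le> k \<and> a < g k t}. ball (snd q) (1 / real (Suc m)))"
    unfolding ball_sup_def by (auto simp: less_SUP_iff dist_commute; blast)
  then show ?thesis by auto
qed

lemma borel_measurable_ball_sup [measurable]: "ball_sup g m \<in> borel_measurable borel"
  by (rule borel_measurableI_greater) (simp add: open_ball_sup_superlevel)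

lemma borel_measurable_joint_limsup [measurable]: "joint_limsup g \<in> borel_measurable borel"
  unfolding joint_limsup_eq_INF_ball_sup[abs_def] by measurable

lemma joint_limsup_max_le: "joint_limsup (\<lambda>n s. max (g n s) c) s \<le> max (joint_limsup g s) c"
proof (rule dense_ge)
  fix y assume "max (joint_limsup g s) c < y"
  then have "joint_limsup g s < y" "c < y" by auto
  then obtain p where p: "p \<in> {(n, \<delta>::real). \<delta> > 0}"
    and "(SUP q \<in> {(m, t). fst p \<le> m \<and> t \<in> ball s (snd p)}. g (fst q) (snd q)) < y"
    unfolding joint_limsup_def by (auto simp: INF_less_iff)
  then have "(SUP q \<in> {(m, t). fst p \<le> m \<and> t \<in> ball s (snd p)}. max (g (fst q) (snd q)) c) \<le> y"
    using \<open>c < y\<close> by (intro SUP_least) (auto dest: SUP_lessD)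
  with p show "joint_limsup (\<lambda>n s. max (g n s) c) s \<le> y"
    unfolding joint_limsup_def by (intro INF_lower2) auto
qed

lemma joint_limsup_truncate_below_le:
  assumes le_C: "\<And>n s. g n s \<le> ereal C" and "0 \<le> C" "0 \<le> K"
  shows "real_of_ereal (joint_limsup (\<lambda>n s. ereal (truncate_below K (g n s))) s)
    \<le> truncate_below K (joint_limsup g s)"
proof -
  have g_fin: "g n s \<noteq> \<infinity>" for n s
    using le_C[of n s] by auto
  have jl_fin: "joint_limsup g s \<noteq> \<infinity>"
    using joint_limsup_le[of g "ereal C" s] le_C by auto
  have bounds: "ereal (- K) \<le> joint_limsup (\<lambda>n s. ereal (truncate_below K (g n s))) s
      \<and> joint_limsup (\<lambda>n s. ereal (truncate_below K (g n s))) s \<le> ereal C"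
    using truncate_below_bounds[OF le_C \<open>0 \<le> C\<close> \<open>0 \<le> K\<close>]
    by (simp add: joint_limsup_ge joint_limsup_le)
  have "joint_limsup (\<lambda>n s. ereal (truncate_below K (g n s))) s
      = joint_limsup (\<lambda>n s. max (g n s) (ereal (- K))) s"
    by (simp add: ereal_truncate_below g_fin)
  also have "\<dots> \<le> max (joint_limsup g s) (ereal (- K))"
    by (rule joint_limsup_max_le)
  also have "\<dots> = ereal (truncate_below K (joint_limsup g s))"
    by (simp add: ereal_truncate_below jl_fin)
  finally show ?thesis
    using real_of_ereal_bounded(1)[OF bounds] by (metis ereal_less_eq(3))
qed

section \<open>Lipschitz envelopes\<close>

definition lipschitz_envelope :: "real \<Rightarrow> ('a::metric_space \<Rightarrow> real) \<Rightarrow> 'a \<Rightarrow> real" where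
  "lipschitz_envelope L e s = (SUP t. e t - L * dist s t)"

context
  fixes L b :: real and e :: "'a::metric_space \<Rightarrow> real"
  assumes L_nonneg: "0 \<le> L" and e_le: "\<And>t. e t \<le> b"
begin

lemma bdd_above_lipschitz_envelope: "bdd_above (range (\<lambda>t. e t - L * dist s t))"
  using e_le L_nonneg by (intro bdd_aboveI2[where M=b]) (smt (verit) mult_nonneg_nonneg zero_le_dist)

lemma lipschitz_envelope_ge: "e s \<le> lipschitz_envelope L e s"
  unfolding lipschitz_envelope_def
  by (rule cSUP_upper2[OF bdd_above_lipschitz_envelope, of s]) auto

lemma lipschitz_envelope_le_local:
  assumes "\<And>t. dist s t < \<delta> \<Longrightarrow> e t \<le> u" and "b - L * \<delta> \<le> u"
  shows "lipschitz_envelope L e s \<le> u"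
  unfolding lipschitz_envelope_def
proof (rule cSUP_least)
  fix t
  show "e t - L * dist s t \<le> u"
  proof (cases "dist s t < \<delta>")
    case True
    then show ?thesis using assms(1) L_nonneg by (smt (verit) mult_nonneg_nonneg zero_le_dist)
  next
    case False
    then have "L * \<delta> \<le> L * dist s t" using L_nonneg by (simp add: mult_left_mono)
    then show ?thesis using assms(2) e_le[of t] by linarith
  qed
qed simp

lemma lipschitz_envelope_lipschitz: "L-lipschitz_on UNIV (lipschitz_envelope L e)"
proof (rule lipschitz_onI)
  have "lipschitz_envelope L e s \<le> lipschitz_envelope L e s' + L * dist s s'" for s s'
    unfolding lipschitz_envelope_def
  proof (rule cSUP_least)
    fix t
    have "L * dist s' t \<le> L * dist s s' + L * dist s t"
      using L_nonneg dist_triangle[of s' t s] by (metis dist_commute distrib_left mult_left_mono)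
    moreover have "e t - L * dist s' t \<le> (SUP t. e t - L * dist s' t)"
      by (rule cSUP_upper[OF _ bdd_above_lipschitz_envelope]) simp
    ultimately show "e t - L * dist s t \<le> (SUP t. e t - L * dist s' t) + L * dist s s'"
      by linarith
  qed simp
  then show "dist (lipschitz_envelope L e s) (lipschitz_envelope L e s') \<le> L * dist s s'" for s s'
    by (smt (verit) dist_commute dist_real_def)
qed (rule L_nonneg)

end

lemma continuous_majorant_below_ball_sup:
  fixes \<phi> :: "nat \<Rightarrow> 'a::metric_space \<Rightarrow> real"
  assumes bounds: "\<And>n s. a \<le> \<phi> n s \<and> \<phi> n s \<le> b"
  obtains \<psi> where "continuous_on UNIV \<psi>" "\<And>s. a \<le> \<psi> s \<and> \<psi> s \<le> b"
    "\<And>n s. m \<le> n \<Longrightarrow> \<phi> n s \<le> \<psi> s"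
    "\<And>s. ereal (\<psi> s) \<le> ball_sup (\<lambda>n s. ereal (\<phi> n s)) m s"
proof -
  define \<Phi> where "\<Phi> = (\<lambda>n s. ereal (\<phi> n s))"
  have \<Phi>_ball_sup_bounds: "ereal a \<le> ball_sup \<Phi> m s \<and> ball_sup \<Phi> m s \<le> ereal b" for s
    using bounds by (intro ball_sup_bounds) (simp add: \<Phi>_def)
  define e where "e t = real_of_ereal (SUP k\<in>{m..}. \<Phi> k t)" for t
  have "ereal a \<le> (SUP k\<in>{m..}. \<Phi> k t) \<and> (SUP k\<in>{m..}. \<Phi> k t) \<le> ereal b" for t
    using bounds by (auto simp: \<Phi>_def intro!: SUP_upper2[of m] SUP_least)
  then have e: "ereal (e t) = (SUP k\<in>{m..}. \<Phi> k t)" "a \<le> e t \<and> e t \<le> b" for t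
    using real_of_ereal_bounded unfolding e_def by blast+
  \<comment> \<open>With this slope, points at distance at least 1/(m+1) cannot lift the envelope above a.\<close>
  define L where "L = (b - a) * real (Suc m)"
  define \<psi> where "\<psi> = lipschitz_envelope L e"
  have "a \<le> b" using bounds[of 0 undefined] by linarith
  then have L: "0 \<le> L" by (simp add: L_def)
  have e_le: "e t \<le> b" for t using e(2) by simp
  show thesis
  proof
    show "continuous_on UNIV \<psi>"
      unfolding \<psi>_def
      by (rule lipschitz_on_continuous_on[OF lipschitz_envelope_lipschitz[where e=e and b=b, OF L e_le]])
    show "\<phi> n s \<le> \<psi> s" if "m \<le> n" for n s
    proof -
      have "ereal (\<phi> n s) \<le> ereal (e s)"
        unfolding e(1) \<Phi>_def using that by (intro SUP_upper2[of n]) auto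
      then show ?thesis
        using lipschitz_envelope_ge[where e=e and b=b and s=s, OF L e_le] by (simp add: \<psi>_def)
    qed
    have below_ball_sup: "ereal (\<psi> s) \<le> ball_sup \<Phi> m s" for s
    proof -
      obtain u where u: "ball_sup \<Phi> m s = ereal u" "a \<le> u" "u \<le> b"
        using \<Phi>_ball_sup_bounds[of s] by (cases "ball_sup \<Phi> m s") auto
      have near: "e t \<le> u" if "dist s t < 1 / real (Suc m)" for t
        using e(1)[of t] u(1) that by (metis ereal_less_eq(3) SUP_least atLeast_iff ball_sup_upper)
      have far: "b - L * (1 / real (Suc m)) \<le> u" using u(2) by (simp add: L_def)
      have "\<psi> s \<le> u"
        unfolding \<psi>_def by (rule lipschitz_envelope_le_local[where e=e and b=b, OF L e_le near far])
      then show ?thesis using u(1) by simp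
    qed
    then show "ereal (\<psi> s) \<le> ball_sup (\<lambda>n s. ereal (\<phi> n s)) m s" for s by (simp add: \<Phi>_def)
    show "a \<le> \<psi> s \<and> \<psi> s \<le> b" for s
    proof
      show "a \<le> \<psi> s"
        using e(2)[of s] lipschitz_envelope_ge[where e=e and b=b and s=s, OF L e_le] by (simp add: \<psi>_def)
      have "ereal (\<psi> s) \<le> ereal b" using below_ball_sup[of s] \<Phi>_ball_sup_bounds[of s] by (meson order.trans)
      then show "\<psi> s \<le> b" by simp
    qed
  qed
qed

section \<open>Integrals along a weakly convergent sequence\<close>

lemma limsup_integral_le_integral_continuous_majorant:
  fixes \<phi> :: "nat \<Rightarrow> 'a::metric_space \<Rightarrow> real" and \<psi> :: "'a \<Rightarrow> real"
  assumes weak: "weak_conv M \<mu>" and fin: "finite_measure \<mu>"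
    and sets_M: "\<And>n. sets (M n) = sets borel" and sets_mu: "sets \<mu> = sets borel"
    and \<phi>_meas: "\<And>n. \<phi> n \<in> borel_measurable borel" and \<phi>_bounds: "\<And>n s. a \<le> \<phi> n s \<and> \<phi> n s \<le> b"
    and \<psi>_cont: "continuous_on UNIV \<psi>" and \<psi>_bounds: "\<And>s. a \<le> \<psi> s \<and> \<psi> s \<le> b"
    and majorant: "\<And>n s. m \<le> n \<Longrightarrow> \<phi> n s \<le> \<psi> s"
  shows "limsup (\<lambda>n. ereal (\<integral>s. \<phi> n s \<partial>M n)) \<le> ereal (\<integral>s. \<psi> s \<partial>\<mu>)"
proof -
  have \<psi>_meas: "\<psi> \<in> borel_measurable borel"
    by (rule borel_measurable_continuous_onI[OF \<psi>_cont])
  have "bounded (range \<psi>)"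
    using \<psi>_bounds by (intro boundedI[where B="\<bar>a\<bar> + \<bar>b\<bar>"]) (auto simp: abs_le_iff; smt (verit))
  then have "(\<lambda>n. ext_integral (M n) (\<lambda>s. ereal (\<psi> s))) \<longlonglongrightarrow> ext_integral \<mu> (\<lambda>s. ereal (\<psi> s))"
    using weak \<psi>_cont unfolding weak_conv_def by blast
  also have "ext_integral \<mu> (\<lambda>s. ereal (\<psi> s)) = ereal (\<integral>s. \<psi> s \<partial>\<mu>)"
    by (intro ext_integral_ereal integrable_bounded_finite_measure[OF fin _ \<psi>_bounds]
        borel_measurable_sets_eq_borel[OF sets_mu \<psi>_meas])
  finally have lim: "(\<lambda>n. ext_integral (M n) (\<lambda>s. ereal (\<psi> s))) \<longlonglongrightarrow> ereal (\<integral>s. \<psi> s \<partial>\<mu>)" .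
  have "eventually (\<lambda>n. ereal (\<integral>s. \<phi> n s \<partial>M n) \<le> ext_integral (M n) (\<lambda>s. ereal (\<psi> s))) sequentially"
    using weak_conv_eventually_finite_measure[OF weak fin] eventually_ge_at_top[of m]
  proof eventually_elim
    case (elim n)
    have "integrable (M n) (\<phi> n)"
      by (rule integrable_bounded_finite_measure[OF elim(1) _ \<phi>_bounds])
         (rule borel_measurable_sets_eq_borel[OF sets_M \<phi>_meas])
    moreover have "integrable (M n) \<psi>"
      by (rule integrable_bounded_finite_measure[OF elim(1) _ \<psi>_bounds])
         (rule borel_measurable_sets_eq_borel[OF sets_M \<psi>_meas])
    ultimately show ?case
      using majorant[OF elim(2)] by (simp add: ext_integral_ereal integral_mono)
  qed
  then have "limsup (\<lambda>n. ereal (\<integral>s. \<phi> n s \<partial>M n)) \<le> limsup (\<lambda>n. ext_integral (M n) (\<lambda>s. ereal (\<psi> s)))"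
    by (rule Limsup_mono)
  also have "\<dots> = ereal (\<integral>s. \<psi> s \<partial>\<mu>)"
    by (rule lim_imp_Limsup[OF _ lim]) simp
  finally show ?thesis .
qed

lemma limsup_integral_le_integral_joint_limsup:
  fixes \<phi> :: "nat \<Rightarrow> 'a::metric_space \<Rightarrow> real"
  assumes weak: "weak_conv M \<mu>" and fin: "finite_measure \<mu>"
    and sets_M: "\<And>n. sets (M n) = sets borel" and sets_mu: "sets \<mu> = sets borel"
    and \<phi>_meas: "\<And>n. \<phi> n \<in> borel_measurable borel" and \<phi>_bounds: "\<And>n s. a \<le> \<phi> n s \<and> \<phi> n s \<le> b"
  shows "limsup (\<lambda>n. ereal (\<integral>s. \<phi> n s \<partial>M n))
    \<le> ereal (\<integral>s. real_of_ereal (joint_limsup (\<lambda>n s. ereal (\<phi> n s)) s) \<partial>\<mu>)"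
proof -
  define \<Phi> where "\<Phi> = (\<lambda>n s. ereal (\<phi> n s))"
  define u where "u = (\<lambda>m s. real_of_ereal (ball_sup \<Phi> m s))"
  define j where "j = (\<lambda>s. real_of_ereal (joint_limsup \<Phi> s))"
  have \<Phi>_bounds: "ereal a \<le> \<Phi> n s \<and> \<Phi> n s \<le> ereal b" for n s
    using \<phi>_bounds by (simp add: \<Phi>_def)
  have ball_sup_eq: "ball_sup \<Phi> m s = ereal (u m s)" and u_bounds: "a \<le> u m s \<and> u m s \<le> b" for m s
    using real_of_ereal_bounded[OF ball_sup_bounds[where g=\<Phi> and m=m and s=s, OF \<Phi>_bounds]]
    unfolding u_def by auto
  have jl_bounds: "ereal a \<le> joint_limsup \<Phi> s \<and> joint_limsup \<Phi> s \<le> ereal b" for s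
    using \<Phi>_bounds by (simp add: joint_limsup_ge joint_limsup_le)
  have jl_eq: "joint_limsup \<Phi> s = ereal (j s)" and j_bounds: "a \<le> j s \<and> j s \<le> b" for s
    using real_of_ereal_bounded[OF jl_bounds[of s]] unfolding j_def by auto
  have u_meas: "u m \<in> borel_measurable \<mu>" for m
    unfolding u_def by (rule borel_measurable_sets_eq_borel[OF sets_mu]) measurable
  have j_meas: "j \<in> borel_measurable \<mu>"
    unfolding j_def by (rule borel_measurable_sets_eq_borel[OF sets_mu]) measurable
  have "(\<lambda>m. ball_sup \<Phi> m s) \<longlonglongrightarrow> joint_limsup \<Phi> s" for s
    unfolding joint_limsup_eq_INF_ball_sup
    by (intro LIMSEQ_INF decseq_SucI ball_sup_antimono) simp
  then have u_conv: "(\<lambda>m. u m s) \<longlonglongrightarrow> j s" for s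
    unfolding u_def by (intro lim_real_of_ereal) (simp add: jl_eq)
  have "(\<lambda>m. \<integral>s. u m s \<partial>\<mu>) \<longlonglongrightarrow> (\<integral>s. j s \<partial>\<mu>)"
  proof (rule integral_dominated_convergence[where w="\<lambda>_. \<bar>a\<bar> + \<bar>b\<bar>"])
    show "integrable \<mu> (\<lambda>_. \<bar>a\<bar> + \<bar>b\<bar>)"
      using fin by (simp add: finite_measure.integrable_const)
    show "AE s in \<mu>. norm (u m s) \<le> \<bar>a\<bar> + \<bar>b\<bar>" for m
      using u_bounds by (intro AE_I2) (simp add: abs_le_iff; smt (verit))
  qed (use u_meas j_meas u_conv in auto)
  moreover have "limsup (\<lambda>n. ereal (\<integral>s. \<phi> n s \<partial>M n)) \<le> ereal (\<integral>s. u m s \<partial>\<mu>)" for m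
  proof -
    obtain \<psi> where \<psi>: "continuous_on UNIV \<psi>" "\<And>s. a \<le> \<psi> s \<and> \<psi> s \<le> b"
      "\<And>n s. m \<le> n \<Longrightarrow> \<phi> n s \<le> \<psi> s" "\<And>s. ereal (\<psi> s) \<le> ball_sup \<Phi> m s"
      using continuous_majorant_below_ball_sup[where \<phi>=\<phi> and m=m, OF \<phi>_bounds]
      unfolding \<Phi>_def by blast
    have "limsup (\<lambda>n. ereal (\<integral>s. \<phi> n s \<partial>M n)) \<le> ereal (\<integral>s. \<psi> s \<partial>\<mu>)"
      by (rule limsup_integral_le_integral_continuous_majorant
          [OF weak fin sets_M sets_mu \<phi>_meas \<phi>_bounds \<psi>(1-3)])
    also have "(\<integral>s. \<psi> s \<partial>\<mu>) \<le> (\<integral>s. u m s \<partial>\<mu>)"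
    proof (rule integral_mono)
      show "integrable \<mu> \<psi>"
        using borel_measurable_sets_eq_borel[OF sets_mu borel_measurable_continuous_onI[OF \<psi>(1)]]
        by (rule integrable_bounded_finite_measure[OF fin _ \<psi>(2)])
      show "integrable \<mu> (u m)"
        by (rule integrable_bounded_finite_measure[OF fin u_meas u_bounds])
      show "\<psi> s \<le> u m s" for s
        using \<psi>(4)[of s] by (simp add: ball_sup_eq)
    qed
    finally show ?thesis by simp
  qed
  ultimately show ?thesis
    unfolding j_def \<Phi>_def by (intro LIMSEQ_le_const[OF tendsto_ereal]) auto
qed

lemma limsup_integral_truncate_below_le:
  fixes g :: "nat \<Rightarrow> 'a::metric_space \<Rightarrow> ereal"
  assumes weak: "weak_conv M \<mu>" and fin: "finite_measure \<mu>"
    and sets_M: "\<And>n. sets (M n) = sets borel" and sets_mu: "sets \<mu> = sets borel"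
    and g_meas: "\<And>n. g n \<in> borel_measurable borel" and le_C: "\<And>n s. g n s \<le> ereal C"
    and "0 \<le> C" "0 \<le> K"
  shows "limsup (\<lambda>n. ereal (\<integral>s. truncate_below K (g n s) \<partial>M n))
    \<le> ereal (\<integral>s. truncate_below K (joint_limsup g s) \<partial>\<mu>)"
proof -
  define \<phi> where "\<phi> = (\<lambda>n s. truncate_below K (g n s))"
  have \<phi>_bounds: "- K \<le> \<phi> n s \<and> \<phi> n s \<le> C" for n s
    unfolding \<phi>_def using le_C \<open>0 \<le> C\<close> \<open>0 \<le> K\<close> by (rule truncate_below_bounds)
  have \<phi>_meas: "\<phi> n \<in> borel_measurable borel" for n
    unfolding \<phi>_def truncate_below_def using g_meas by measurable
  have "limsup (\<lambda>n. ereal (\<integral>s. \<phi> n s \<partial>M n))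
      \<le> ereal (\<integral>s. real_of_ereal (joint_limsup (\<lambda>n s. ereal (\<phi> n s)) s) \<partial>\<mu>)"
    by (rule limsup_integral_le_integral_joint_limsup[OF weak fin sets_M sets_mu \<phi>_meas \<phi>_bounds])
  also have "\<dots> \<le> ereal (\<integral>s. truncate_below K (joint_limsup g s) \<partial>\<mu>)"
    unfolding ereal_less_eq(3)
  proof (rule integral_mono)
    show "integrable \<mu> (\<lambda>s. real_of_ereal (joint_limsup (\<lambda>n s. ereal (\<phi> n s)) s))"
    proof (rule integrable_bounded_finite_measure[OF fin])
      show "(\<lambda>s. real_of_ereal (joint_limsup (\<lambda>n s. ereal (\<phi> n s)) s)) \<in> borel_measurable \<mu>"
        by (rule borel_measurable_sets_eq_borel[OF sets_mu]) measurable
      show "- K \<le> real_of_ereal (joint_limsup (\<lambda>n s. ereal (\<phi> n s)) s)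
          \<and> real_of_ereal (joint_limsup (\<lambda>n s. ereal (\<phi> n s)) s) \<le> C" for s
        using \<phi>_bounds by (intro real_of_ereal_bounded(2)) (simp add: joint_limsup_ge joint_limsup_le)
    qed
    show "integrable \<mu> (\<lambda>s. truncate_below K (joint_limsup g s))"
    proof (rule integrable_bounded_finite_measure[OF fin])
      show "(\<lambda>s. truncate_below K (joint_limsup g s)) \<in> borel_measurable \<mu>"
        unfolding truncate_below_def by (rule borel_measurable_sets_eq_borel[OF sets_mu]) measurable
      show "- K \<le> truncate_below K (joint_limsup g s) \<and> truncate_below K (joint_limsup g s) \<le> C" for s
        using joint_limsup_le[OF le_C] \<open>0 \<le> C\<close> \<open>0 \<le> K\<close> by (rule truncate_below_bounds)
    qed
    show "real_of_ereal (joint_limsup (\<lambda>n s. ereal (\<phi> n s)) s) \<le> truncate_below K (joint_limsup g s)" for s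
      unfolding \<phi>_def using le_C \<open>0 \<le> C\<close> \<open>0 \<le> K\<close> by (rule joint_limsup_truncate_below_le)
  qed
  finally show ?thesis by (simp add: \<phi>_def)
qed

lemma eventually_lower_tail_less:
  fixes g :: "nat \<Rightarrow> 'a::metric_space \<Rightarrow> ereal"
  assumes weak: "weak_conv M \<mu>" and fin: "finite_measure \<mu>"
    and sets_M: "\<And>n. sets (M n) = sets borel" and sets_mu: "sets \<mu> = sets borel"
    and g_meas: "\<And>n. g n \<in> borel_measurable borel" and le_C: "\<And>n s. g n s \<le> ereal C" and "0 \<le> C"
    and lower: "- \<infinity> < ext_integral \<mu> (joint_limsup g)"
    and ineq: "ext_integral \<mu> (joint_limsup g) \<le> liminf (\<lambda>n. ext_integral (M n) (g n))"
    and "0 \<le> K" "0 < \<eta>"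
  shows "eventually (\<lambda>n. lower_tail (M n) (g n) K < lower_tail \<mu> (joint_limsup g) K + ennreal \<eta>) sequentially"
proof -
  define G where "G = joint_limsup g"
  have G_meas: "G \<in> borel_measurable \<mu>"
    unfolding G_def by (rule borel_measurable_sets_eq_borel[OF sets_mu]) measurable
  have G_le_C: "G s \<le> ereal C" for s
    unfolding G_def using le_C by (rule joint_limsup_le)
  have G_neg: "(\<integral>\<^sup>+ s. e2ennreal (- G s) \<partial>\<mu>) < \<infinity>"
    using fin G_le_C lower unfolding G_def by (rule nn_integral_negative_part_finite)
  define I where "I = (\<integral>s. truncate_below K (G s) \<partial>\<mu>)"
  define t where "t = enn2real (lower_tail \<mu> G K)"
  note trunc_G = ext_integral_truncate_below[where h=G, OF fin G_meas G_le_C \<open>0 \<le> C\<close> \<open>0 \<le> K\<close> G_neg]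
  have "limsup (\<lambda>n. ereal (\<integral>s. truncate_below K (g n s) \<partial>M n)) \<le> ereal I"
    unfolding I_def G_def
    by (rule limsup_integral_truncate_below_le
        [where g=g, OF weak fin sets_M sets_mu g_meas le_C \<open>0 \<le> C\<close> \<open>0 \<le> K\<close>])
  also have "\<dots> < ereal (I + \<eta> / 2)"
    using \<open>0 < \<eta>\<close> by simp
  finally have ev_upper:
      "eventually (\<lambda>n. ereal (\<integral>s. truncate_below K (g n s) \<partial>M n) < ereal (I + \<eta> / 2)) sequentially"
    by (rule Limsup_lessD)
  have "ereal (I - t - \<eta> / 2) < ext_integral \<mu> (joint_limsup g)"
    using trunc_G(3) \<open>0 < \<eta>\<close> by (simp add: G_def I_def t_def)
  then have "ereal (I - t - \<eta> / 2) < liminf (\<lambda>n. ext_integral (M n) (g n))"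
    using ineq by (rule order.strict_trans2)
  then have ev_lower: "eventually (\<lambda>n. ereal (I - t - \<eta> / 2) < ext_integral (M n) (g n)) sequentially"
    by (rule less_LiminfD)
  show ?thesis
    using weak_conv_eventually_finite_measure[OF weak fin] ev_upper ev_lower
  proof eventually_elim
    case (elim n)
    have g_meas_n: "g n \<in> borel_measurable (M n)"
      by (rule borel_measurable_sets_eq_borel[OF sets_M g_meas])
    have "- \<infinity> < ext_integral (M n) (g n)"
      using elim(3) by (rule less_trans[rotated]) simp
    then have g_neg: "(\<integral>\<^sup>+ s. e2ennreal (- g n s) \<partial>M n) < \<infinity>"
      by (rule nn_integral_negative_part_finite[where h="g n", OF elim(1) le_C])
    note trunc = ext_integral_truncate_below[where h="g n", OF elim(1) g_meas_n le_C \<open>0 \<le> C\<close> \<open>0 \<le> K\<close> g_neg]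
    have "I - t - \<eta> / 2 < (\<integral>s. truncate_below K (g n s) \<partial>M n) - enn2real (lower_tail (M n) (g n) K)"
      using elim(3) unfolding trunc(3) by simp
    moreover have "(\<integral>s. truncate_below K (g n s) \<partial>M n) < I + \<eta> / 2"
      using elim(2) by simp
    moreover have "0 \<le> t"
      by (simp add: t_def)
    ultimately have "ennreal (enn2real (lower_tail (M n) (g n) K)) < ennreal (t + \<eta>)"
      using \<open>0 < \<eta>\<close> by (intro ennreal_lessI) linarith+
    then show ?case
      using trunc(2) trunc_G(2) \<open>0 < \<eta>\<close> by (simp add: t_def G_def ennreal_plus)
  qed
qed

lemma eventually_uniform_lower_tail_le:
  fixes g :: "nat \<Rightarrow> 'a::metric_space \<Rightarrow> ereal"
  assumes weak: "weak_conv M \<mu>" and fin: "finite_measure \<mu>"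
    and sets_M: "\<And>n. sets (M n) = sets borel" and sets_mu: "sets \<mu> = sets borel"
    and g_meas: "\<And>n. g n \<in> borel_measurable borel" and le_C: "\<And>n s. g n s \<le> ereal C" and "0 \<le> C"
    and lower: "- \<infinity> < ext_integral \<mu> (joint_limsup g)"
    and ineq: "ext_integral \<mu> (joint_limsup g) \<le> liminf (\<lambda>n. ext_integral (M n) (g n))"
    and neg_fin: "\<And>n. N \<le> n \<Longrightarrow> (\<integral>\<^sup>+ s. e2ennreal (- g n s) \<partial>M n) < \<infinity>"
    and "0 < \<epsilon>"
  shows "eventually (\<lambda>K. \<forall>n. lower_tail (M (n + N)) (g (n + N)) K \<le> ennreal \<epsilon>) at_top"
proof -
  have g_meas_M: "g n \<in> borel_measurable (M n)" for n
    by (rule borel_measurable_sets_eq_borel[OF sets_M g_meas])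
  have G_meas: "joint_limsup g \<in> borel_measurable \<mu>"
    by (rule borel_measurable_sets_eq_borel[OF sets_mu]) measurable
  have "(\<integral>\<^sup>+ s. e2ennreal (- joint_limsup g s) \<partial>\<mu>) < \<infinity>"
    using fin joint_limsup_le[OF le_C] lower by (rule nn_integral_negative_part_finite)
  then have "eventually (\<lambda>K. lower_tail \<mu> (joint_limsup g) K < ennreal (\<epsilon> / 2)) at_top"
    by (rule order_tendstoD(2)[OF lower_tail_tendsto_0[OF G_meas]]) (simp_all add: \<open>0 < \<epsilon>\<close>)
  then obtain K0 where K0: "\<And>K. K0 \<le> K \<Longrightarrow> lower_tail \<mu> (joint_limsup g) K < ennreal (\<epsilon> / 2)"
    by (auto simp: eventually_at_top_linorder)
  define K where "K = max K0 0"
  have "0 \<le> K" by (simp add: K_def)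
  have "lower_tail \<mu> (joint_limsup g) K + ennreal (\<epsilon> / 2) \<le> ennreal (\<epsilon> / 2) + ennreal (\<epsilon> / 2)"
    using K0[of K] by (intro add_right_mono) (simp add: K_def)
  also have "\<dots> = ennreal \<epsilon>"
    using \<open>0 < \<epsilon>\<close> by (simp flip: ennreal_plus)
  finally have tail_\<mu>: "lower_tail \<mu> (joint_limsup g) K + ennreal (\<epsilon> / 2) \<le> ennreal \<epsilon>" .
  have "eventually (\<lambda>n. lower_tail (M n) (g n) K < lower_tail \<mu> (joint_limsup g) K + ennreal (\<epsilon> / 2)) sequentially"
    by (rule eventually_lower_tail_less[OF weak fin sets_M sets_mu g_meas le_C \<open>0 \<le> C\<close> lower ineq \<open>0 \<le> K\<close>])
       (simp add: \<open>0 < \<epsilon>\<close>)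
  then have "eventually (\<lambda>n. lower_tail (M n) (g n) K \<le> ennreal \<epsilon>) sequentially"
    by (rule eventually_mono) (use tail_\<mu> in auto)
  then have tail: "eventually (\<lambda>n. lower_tail (M (n + N)) (g (n + N)) K \<le> ennreal \<epsilon>) sequentially"
    by (rule eventually_sequentially_seg[THEN iffD2])
  have each: "eventually (\<lambda>K. lower_tail (M (n + N)) (g (n + N)) K \<le> ennreal \<epsilon>) at_top" for n
  proof -
    have "(lower_tail (M (n + N)) (g (n + N)) \<longlongrightarrow> 0) at_top"
      by (rule lower_tail_tendsto_0[OF g_meas_M neg_fin]) simp
    then have "eventually (\<lambda>K. lower_tail (M (n + N)) (g (n + N)) K < ennreal \<epsilon>) at_top"
      by (rule order_tendstoD(2)) (simp add: \<open>0 < \<epsilon>\<close>)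
    then show ?thesis
      by (rule eventually_mono) (rule less_imp_le)
  qed
  show ?thesis
    by (rule eventually_all_if_antimono[OF lower_tail_antimono each tail])
qed

section \<open>Uniform integrability of the negative parts\<close>

lemma neg_part_tail_le:
  assumes "g x \<le> f x" "0 \<le> K" "2 * K \<le> K'" "ereal K' \<le> neg_part f x"
  shows "e2ennreal (neg_part f x) \<le> 2 * e2ennreal (- g x - ereal K)"
proof (cases "0 \<le> f x")
  case False
  show ?thesis
  proof (cases "g x")
    case (real b)
    then obtain a where a: "f x = ereal a" "b \<le> a" "a < 0"
      using assms(1) False by (cases "f x") auto
    then have "ennreal (- a) \<le> ennreal (2 * (- b - K))"
      using assms(2-4) by (intro ennreal_leI) (simp add: neg_part_def)
    also have "\<dots> = 2 * ennreal (- b - K)"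
      using ennreal_mult'[of 2 "- b - K"] by simp
    finally show ?thesis using a real by (simp add: neg_part_def)
  qed (use assms False in \<open>auto simp: neg_part_def\<close>)
qed (simp add: neg_part_def e2ennreal_neg)

lemma abs_neg_part: "\<bar>neg_part f x\<bar> = neg_part f x"
  unfolding neg_part_def by (cases "f x") (auto simp: min_def)

lemma unif_integrable_neg_part_if_lower_tail:
  assumes le: "\<And>n s. g n s \<le> f n s" and [measurable]: "\<And>n. g n \<in> borel_measurable (\<nu> n)"
    and tails: "\<And>\<epsilon>. 0 < \<epsilon> \<Longrightarrow> eventually (\<lambda>K. \<forall>n. lower_tail (\<nu> n) (g n) K \<le> ennreal \<epsilon>) at_top"
  shows "unif_integrable (\<lambda>n. neg_part (f n)) \<nu>"
  unfolding unif_integrable_def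
proof (rule order_tendstoI)
  fix a :: ennreal assume "0 < a"
  obtain \<epsilon> where "0 < \<epsilon>" "ennreal (2 * \<epsilon>) < a"
  proof (cases a rule: ennreal_cases)
    case (real r)
    then show ?thesis using \<open>0 < a\<close> by (intro that[of "r / 4"]) (auto simp: ennreal_less_iff)
  qed (auto intro: that[of 1])
  obtain K0 where K0: "\<And>K n. K0 \<le> K \<Longrightarrow> lower_tail (\<nu> n) (g n) K \<le> ennreal \<epsilon>"
    using tails[OF \<open>0 < \<epsilon>\<close>] by (auto simp: eventually_at_top_linorder)
  define K where "K = max K0 0"
  have "0 \<le> K" by (simp add: K_def)
  show "eventually (\<lambda>K'. (SUP n. \<integral>\<^sup>+ x. e2ennreal \<bar>neg_part (f n) x\<bar>
      * indicator {x. ereal K' \<le> \<bar>neg_part (f n) x\<bar>} x \<partial>\<nu> n) < a) at_top"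
    using eventually_ge_at_top[of "2 * K"]
  proof eventually_elim
    case (elim K')
    have "(\<integral>\<^sup>+ x. e2ennreal \<bar>neg_part (f n) x\<bar> * indicator {x. ereal K' \<le> \<bar>neg_part (f n) x\<bar>} x \<partial>\<nu> n)
        \<le> ennreal (2 * \<epsilon>)" for n
    proof -
      have "(\<integral>\<^sup>+ x. e2ennreal \<bar>neg_part (f n) x\<bar> * indicator {x. ereal K' \<le> \<bar>neg_part (f n) x\<bar>} x \<partial>\<nu> n)
          \<le> (\<integral>\<^sup>+ x. 2 * e2ennreal (- g n x - ereal K) \<partial>\<nu> n)"
        using le elim \<open>0 \<le> K\<close> unfolding abs_neg_part
        by (intro nn_integral_mono) (auto simp: indicator_def intro!: neg_part_tail_le)
      also have "\<dots> = 2 * lower_tail (\<nu> n) (g n) K"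
        unfolding lower_tail_def by (intro nn_integral_cmult) measurable
      also have "\<dots> \<le> ennreal (2 * \<epsilon>)"
        using K0[of K n] \<open>0 < \<epsilon>\<close> by (simp add: K_def ennreal_mult' mult_left_mono)
      finally show ?thesis .
    qed
    then show ?case
      by (rule SUP_least[THEN le_less_trans]) (rule \<open>ennreal (2 * \<epsilon>) < a\<close>)
  qed
qed simp

theorem theorem2p6:
  fixes M :: "nat \<Rightarrow> 'a::metric_space measure" and \<mu> :: "'a measure"
    and f g :: "nat \<Rightarrow> 'a \<Rightarrow> ereal"
  assumes sets_M: "\<And>n. sets (M n) = sets borel"
    and sets_mu: "sets \<mu> = sets borel"
    and fin: "finite_measure \<mu>"
    and weak: "weak_conv M \<mu>"
    and f_meas: "\<And>n. f n \<in> borel_measurable borel"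
    and g_meas: "\<And>n. g n \<in> borel_measurable borel"
    and fg: "\<And>n s. f n s \<ge> g n s"
    and def_lim: "integral_defined \<mu> (joint_limsup g)"
    and def_g: "\<And>n. integral_defined (M n) (g n)"
    and lower: "- \<infinity> < ext_integral \<mu> (joint_limsup g)"
    and ineq: "ext_integral \<mu> (joint_limsup g) \<le> liminf (\<lambda>n. ext_integral (M n) (g n))"
    and bdd: "\<exists>C::real. \<forall>n s. g n s \<le> ereal C"
  shows "\<exists>N::nat. unif_integrable (\<lambda>n. neg_part (f (n + N))) (\<lambda>n. M (n + N))"
proof -
  obtain C0 where "\<And>n s. g n s \<le> ereal C0" using bdd by blast
  then have le_C: "g n s \<le> ereal (max C0 0)" for n s
    by (meson ereal_less_eq(3) max.cobounded1 order.trans)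
  have g_meas_M: "g n \<in> borel_measurable (M n)" for n
    by (rule borel_measurable_sets_eq_borel[OF sets_M g_meas])
  have "- \<infinity> < liminf (\<lambda>n. ext_integral (M n) (g n))"
    using lower ineq by (rule less_le_trans)
  then have "eventually (\<lambda>n. - \<infinity> < ext_integral (M n) (g n)) sequentially"
    by (rule less_LiminfD)
  then have "eventually (\<lambda>n. (\<integral>\<^sup>+ s. e2ennreal (- g n s) \<partial>M n) < \<infinity>) sequentially"
    using weak_conv_eventually_finite_measure[OF weak fin]
    by eventually_elim (rule nn_integral_negative_part_finite[OF _ le_C])
  then obtain N where N: "\<And>n. N \<le> n \<Longrightarrow> (\<integral>\<^sup>+ s. e2ennreal (- g n s) \<partial>M n) < \<infinity>"
    by (auto simp: eventually_sequentially)
  have "unif_integrable (\<lambda>n. neg_part (f (n + N))) (\<lambda>n. M (n + N))"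
  proof (rule unif_integrable_neg_part_if_lower_tail[where g="\<lambda>n. g (n + N)", OF fg g_meas_M])
    show "eventually (\<lambda>K. \<forall>n. lower_tail (M (n + N)) (g (n + N)) K \<le> ennreal \<epsilon>) at_top" if "0 < \<epsilon>" for \<epsilon>
      using eventually_uniform_lower_tail_le[where g=g, OF weak fin sets_M sets_mu g_meas le_C max.cobounded2
          lower ineq N that] .
  qed
  then show ?thesis ..
qed

end
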